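(* Let $M=I\times F_1\times F_2\times F_3$ with metric $g=-dt^2\oplus\phi^{2p_1}g_{F_1}\oplus\phi^{2p_2}g_{F_2}\oplus\phi^{2p_3}g_{F_3}$, where $I\subset\mathbb{R}$ is an open interval, $\phi:I\to(0,\infty)$ is smooth, $p_1,p_2,p_3\in\mathbb{R}$ with $p_i\neq p_j$ for some $i,j\in\{1,2,3\}$, and each $(F_i,g_{F_i})$ is a one-dimensional Riemannian manifold; let $\zeta=p_1+p_2+p_3$, $\eta=p_1^2+p_2^2+p_3^2$, and let $\overline\nabla$ be the semi-symmetric metric connection determined by $P=\frac{\partial}{\partial t}$. Then $(M,\overline\nabla)$ is Einstein with Einstein constant $\lambda$ if and only if $\lambda=0$, $\frac{2\eta}{\zeta^2}=1$, and $\phi=c_0e^{\frac{2t}{\zeta}}$ for a constant $c_0$.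
   Context: $\nabla$ is the Levi-Civita connection of $g$, $\pi(X)=g(X,P)$, and $\overline\nabla_XY=\nabla_XY+\pi(Y)X-g(X,Y)P$. Conventions: $\overline R(X,Y)Z=\overline\nabla_X\overline\nabla_YZ-\overline\nabla_Y\overline\nabla_XZ-\overline\nabla_{[X,Y]}Z$, $\overline{\mathrm{Ric}}(X,Y)=\sum_k\varepsilon_kg(\overline R(X,E_k)Y,E_k)$ for a local orthonormal frame $(E_k)$, $\varepsilon_k=g(E_k,E_k)$; Einstein with constant $\lambda$ means $\overline{\mathrm{Ric}}=\lambda g$. *)

theory Defs
  imports "HOL-Analysis.Analysis"
begin

text \<open>Local coordinate framework on an open subset of R^4.  Points are vectors
  x :: real^4, coordinate 0 is the time coordinate t, coordinates 1,2,3 are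
  (arc-length) coordinates on the one-dimensional fibres F_1, F_2, F_3.\<close>

type_synonym pt = "real^4"
type_synonym vfield = "pt \<Rightarrow> real^4"
type_synonym metric = "pt \<Rightarrow> real^4^4"

definition smooth_on_real :: "(real \<Rightarrow> real) \<Rightarrow> real set \<Rightarrow> bool" where
  "smooth_on_real f S \<longleftrightarrow> (\<forall>n. \<forall>t\<in>S. ((deriv ^^ n) f) differentiable (at t))"

definition pd :: "4 \<Rightarrow> (pt \<Rightarrow> real) \<Rightarrow> pt \<Rightarrow> real" where
  "pd k f x = deriv (\<lambda>s. f (x + s *\<^sub>R axis k 1)) 0"

definition gm :: "metric \<Rightarrow> pt \<Rightarrow> real^4 \<Rightarrow> real^4 \<Rightarrow> real" where
  "gm G x u v = (\<Sum>i\<in>UNIV. \<Sum>j\<in>UNIV. u $ i * G x $ i $ j * v $ j)"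

definition chr :: "metric \<Rightarrow> 4 \<Rightarrow> 4 \<Rightarrow> 4 \<Rightarrow> pt \<Rightarrow> real" where
  "chr G k i j x = (1/2) * (\<Sum>l\<in>UNIV. matrix_inv (G x) $ k $ l *
      (pd i (\<lambda>y. G y $ j $ l) x + pd j (\<lambda>y. G y $ i $ l) x - pd l (\<lambda>y. G y $ i $ j) x))"

definition LC :: "metric \<Rightarrow> vfield \<Rightarrow> vfield \<Rightarrow> vfield" where
  "LC G X Y x = (\<chi> k. \<Sum>i\<in>UNIV. X x $ i *
      (pd i (\<lambda>y. Y y $ k) x + (\<Sum>j\<in>UNIV. chr G k i j x * Y x $ j)))"

definition ssm :: "metric \<Rightarrow> vfield \<Rightarrow> vfield \<Rightarrow> vfield \<Rightarrow> vfield" where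
  "ssm G P X Y x = LC G X Y x + gm G x (Y x) (P x) *\<^sub>R X x - gm G x (X x) (Y x) *\<^sub>R P x"

definition lie_bracket :: "vfield \<Rightarrow> vfield \<Rightarrow> vfield" where
  "lie_bracket X Y x = (\<chi> k. \<Sum>i\<in>UNIV. X x $ i * pd i (\<lambda>y. Y y $ k) x - Y x $ i * pd i (\<lambda>y. X y $ k) x)"

definition curv :: "(vfield \<Rightarrow> vfield \<Rightarrow> vfield) \<Rightarrow> vfield \<Rightarrow> vfield \<Rightarrow> vfield \<Rightarrow> vfield" where
  "curv D X Y Z = (\<lambda>x. D X (D Y Z) x - D Y (D X Z) x - D (lie_bracket X Y) Z x)"

definition cfield :: "4 \<Rightarrow> vfield" where
  "cfield a = (\<lambda>x. axis a 1)"

text \<open>Ricci tensor Ric(X,Y) = sum_k eps_k g(R(X,E_k)Y,E_k), written via the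
  (frame independent) trace with the inverse metric over the coordinate frame:
  Ric(X,Y) = sum_{c,d} g^{cd} g(R(X,d_c)Y, d_d).\<close>
definition ric :: "metric \<Rightarrow> (vfield \<Rightarrow> vfield \<Rightarrow> vfield) \<Rightarrow> vfield \<Rightarrow> vfield \<Rightarrow> pt \<Rightarrow> real" where
  "ric G D X Y x = (\<Sum>c\<in>UNIV. \<Sum>d\<in>UNIV. matrix_inv (G x) $ c $ d *
      gm G x (curv D X (cfield c) Y x) (cfield d x))"

definition einstein :: "metric \<Rightarrow> (vfield \<Rightarrow> vfield \<Rightarrow> vfield) \<Rightarrow> pt set \<Rightarrow> real \<Rightarrow> bool" where
  "einstein G D U lam \<longleftrightarrow>
     (\<forall>x\<in>U. \<forall>a b. ric G D (cfield a) (cfield b) x = lam * G x $ a $ b)"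

definition warp_metric :: "(real \<Rightarrow> real) \<Rightarrow> real \<Rightarrow> real \<Rightarrow> real \<Rightarrow> metric" where
  "warp_metric \<phi> p1 p2 p3 x = (\<chi> i j. if i \<noteq> j then 0
       else if i = 0 then -1
       else if i = 1 then \<phi> (x $ 0) powr (2 * p1)
       else if i = 2 then \<phi> (x $ 0) powr (2 * p2)
       else \<phi> (x $ 0) powr (2 * p3))"

end

theory Submission
  imports Defs
begin

text \<open>The metric depends on the time coordinate only, so every coordinate expression
  (Christoffel symbols, covariant derivatives of coordinate fields, Ricci components) is a
  function of t alone and can be computed as for a diagonal metric diag(-1, w_1(t), w_2(t), w_3(t)).
  For w_i = phi^(2 p_i) and H = phi'/phi, the Einstein condition becomes one equation from the
  (t,t) component and three from the fibre components; the latter are affine in p_i with slope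
  H' + zeta H^2 - 2H.  As the p_i are not all equal, that slope vanishes and zeta H = 2 + lambda.
  For zeta = 0 this forces eta H^2 = 2 and H' = 2H, which is impossible; otherwise H is constant,
  and the remaining equations give lambda = 0, H = 2/zeta and 2 eta = zeta^2, i.e.
  phi = c0 exp(2t/zeta).\<close>

lemma pd_time_fun: "pd i (\<lambda>y. F (y $ 0)) x = (if i = 0 then deriv F (x $ 0) else 0)"
proof (cases "i = 0")
  case True
  then have "(\<lambda>s. F ((x + s *\<^sub>R axis i 1) $ 0)) = F \<circ> (\<lambda>s. x $ 0 + s)"
    by (simp add: axis_def comp_def)
  with True show ?thesis by (simp add: pd_def deriv_shift_0[of F])
next
  case False
  then have "(\<lambda>s. F ((x + s *\<^sub>R axis i 1) $ 0)) = (\<lambda>s. F (x $ 0))"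
    by (simp add: axis_def)
  with False show ?thesis by (simp add: pd_def)
qed

lemma sum_axis_mult: "(\<Sum>i\<in>UNIV. axis a (1::'a::comm_ring_1) $ i * f i) = f a"
proof -
  have "(\<lambda>i. axis a (1::'a) $ i * f i) = (\<lambda>i. if i = a then f i else 0)"
    by (auto simp: axis_def)
  then show ?thesis by (simp only:) simp
qed

lemma cfield_apply: "cfield a x = axis a 1"
  by (simp add: cfield_def)

lemma lie_bracket_cfield: "lie_bracket (cfield a) (cfield b) = (\<lambda>x. 0)"
  by (rule ext) (simp add: lie_bracket_def cfield_def pd_def vec_eq_iff)

lemma ssm_zero_field: "ssm G P (\<lambda>x. 0) Z = (\<lambda>x. 0)"
  by (rule ext) (simp add: ssm_def LC_def gm_def vec_eq_iff)

lemma all_time_coord_iff: "(\<forall>x::real^'n. x $ i \<in> I \<longrightarrow> P (x $ i)) \<longleftrightarrow> (\<forall>t\<in>I. P t)"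
proof
  assume h: "\<forall>x::real^'n. x $ i \<in> I \<longrightarrow> P (x $ i)"
  show "\<forall>t\<in>I. P t"
  proof
    fix t assume "t \<in> I"
    then show "P t" using h[rule_format, of "\<chi> _. t"] by simp
  qed
qed auto

subsection \<open>Metrics depending on time only\<close>

text \<open>For a metric W(t) and a vector field F(t) depending on time only, ssm_time W a F is the
  semi-symmetric connection with P = d/dt applied along the coordinate field d/dx^a.  Since
  coordinate fields commute, the curvature in ric_time has no bracket term.\<close>

definition chr_time :: "(real \<Rightarrow> real^4^4) \<Rightarrow> 4 \<Rightarrow> 4 \<Rightarrow> 4 \<Rightarrow> real \<Rightarrow> real" where
  "chr_time W k i j t = (1/2) * (\<Sum>l\<in>UNIV. matrix_inv (W t) $ k $ l *
      ((if i = 0 then deriv (\<lambda>t. W t $ j $ l) t else 0)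
       + (if j = 0 then deriv (\<lambda>t. W t $ i $ l) t else 0)
       - (if l = 0 then deriv (\<lambda>t. W t $ i $ j) t else 0)))"

definition gm_time :: "(real \<Rightarrow> real^4^4) \<Rightarrow> real \<Rightarrow> real^4 \<Rightarrow> real^4 \<Rightarrow> real" where
  "gm_time W t u v = (\<Sum>i\<in>UNIV. \<Sum>j\<in>UNIV. u $ i * W t $ i $ j * v $ j)"

definition LC_time :: "(real \<Rightarrow> real^4^4) \<Rightarrow> 4 \<Rightarrow> (real \<Rightarrow> real^4) \<Rightarrow> real \<Rightarrow> real^4" where
  "LC_time W a F t = (\<chi> k. (if a = 0 then deriv (\<lambda>t. F t $ k) t else 0)
      + (\<Sum>j\<in>UNIV. chr_time W k a j t * F t $ j))"

definition ssm_time :: "(real \<Rightarrow> real^4^4) \<Rightarrow> 4 \<Rightarrow> (real \<Rightarrow> real^4) \<Rightarrow> real \<Rightarrow> real^4" where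
  "ssm_time W a F t = LC_time W a F t + gm_time W t (F t) (axis 0 1) *\<^sub>R axis a 1
      - gm_time W t (axis a 1) (F t) *\<^sub>R axis 0 1"

definition ric_time :: "(real \<Rightarrow> real^4^4) \<Rightarrow> 4 \<Rightarrow> 4 \<Rightarrow> real \<Rightarrow> real" where
  "ric_time W a b t = (\<Sum>c\<in>UNIV. \<Sum>d\<in>UNIV. matrix_inv (W t) $ c $ d *
      gm_time W t (ssm_time W a (ssm_time W c (\<lambda>_. axis b 1)) t
                   - ssm_time W c (ssm_time W a (\<lambda>_. axis b 1)) t) (axis d 1))"

lemma chr_time_eq: "chr (\<lambda>x. W (x $ 0)) k i j x = chr_time W k i j (x $ 0)"
  unfolding chr_def chr_time_def by (simp add: pd_time_fun[where F = "\<lambda>t. W t $ a $ b" for a b])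

lemma gm_time_eq: "gm (\<lambda>x. W (x $ 0)) x u v = gm_time W (x $ 0) u v"
  by (simp add: gm_def gm_time_def)

lemma LC_time_eq: "LC (\<lambda>x. W (x $ 0)) (cfield a) (\<lambda>y. F (y $ 0)) x = LC_time W a F (x $ 0)"
  unfolding LC_def LC_time_def
  by (simp add: cfield_apply sum_axis_mult pd_time_fun[where F = "\<lambda>t. F t $ b" for b] chr_time_eq)

lemma ssm_time_eq:
  "ssm (\<lambda>x. W (x $ 0)) (cfield 0) (cfield a) (\<lambda>y. F (y $ 0)) = (\<lambda>y. ssm_time W a F (y $ 0))"
  by (rule ext) (simp add: ssm_def ssm_time_def LC_time_eq gm_time_eq cfield_apply)

lemma ssm_time_cfield:
  "ssm (\<lambda>x. W (x $ 0)) (cfield 0) (cfield a) (cfield b) = (\<lambda>y. ssm_time W a (\<lambda>_. axis b 1) (y $ 0))"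
  using ssm_time_eq[of W a "\<lambda>_. axis b 1"] by (simp add: cfield_def)

lemma ric_time_eq:
  "ric (\<lambda>x. W (x $ 0)) (ssm (\<lambda>x. W (x $ 0)) (cfield 0)) (cfield a) (cfield b) x = ric_time W a b (x $ 0)"
  unfolding ric_def ric_time_def curv_def
  by (simp add: ssm_time_cfield ssm_time_eq[where F = "ssm_time W c (\<lambda>_. axis b 1)" for c]
      lie_bracket_cfield ssm_zero_field gm_time_eq cfield_apply)

definition diag_mat :: "('n::finite \<Rightarrow> 'a::zero) \<Rightarrow> 'a^'n^'n" where
  "diag_mat d = (\<chi> i j. if i = j then d i else 0)"

lemma matrix_inv_eqI:
  fixes A :: "'a::semiring_1^'n^'m" and B :: "'a^'m^'n"
  assumes "A ** B = mat 1" "B ** A = mat 1"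
  shows "matrix_inv A = B"
  unfolding matrix_inv_def
proof (rule some_equality)
  fix B' assume B': "A ** B' = mat 1 \<and> B' ** A = mat 1"
  have "B' = B' ** (A ** B)" using assms by (simp add: matrix_mul_rid)
  also have "\<dots> = B" using B' by (simp add: matrix_mul_assoc matrix_mul_lid)
  finally show "B' = B" .
qed (use assms in simp)

lemma diag_mat_mult:
  fixes d e :: "'n::finite \<Rightarrow> 'a::semiring_1"
  shows "diag_mat d ** diag_mat e = diag_mat (\<lambda>i. d i * e i)"
proof -
  have "(\<Sum>k\<in>UNIV. (if i = k then d i else 0) * (if k = j then e k else 0))
      = (if i = j then d i * e i else 0)" for i j
  proof -
    have "(\<lambda>k. (if i = k then d i else 0) * (if k = j then e k else 0))
        = (\<lambda>k. if k = i then d i * (if k = j then e k else 0) else 0)"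
      by auto
    then show ?thesis by (simp only:) simp
  qed
  then show ?thesis
    by (simp add: diag_mat_def matrix_matrix_mult_def vec_eq_iff)
qed

lemma matrix_inv_diag_mat:
  fixes d :: "'n::finite \<Rightarrow> 'a::field"
  assumes "\<And>i. d i \<noteq> 0"
  shows "matrix_inv (diag_mat d) = diag_mat (\<lambda>i. inverse (d i))"
proof -
  have one: "diag_mat (\<lambda>_. 1::'a) = mat 1"
    by (simp add: mat_def diag_mat_def vec_eq_iff)
  from assms show ?thesis
    by (intro matrix_inv_eqI) (simp_all add: diag_mat_mult one)
qed

lemma diag_mat_nth [simp]: "diag_mat d $ i $ j = (if i = j then d i else 0)"
  by (simp add: diag_mat_def)

lemma sum_delta_mult:
  "(\<Sum>l\<in>(UNIV::'n::finite set). (if k = l then c else 0) * f l) = (c::'a::comm_ring_1) * f k"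
proof -
  have "(\<lambda>l. (if k = l then c else 0) * f l) = (\<lambda>l. if l = k then c * f l else 0)"
    by auto
  then show ?thesis by (simp only:) simp
qed

subsection \<open>Time-dependent diagonal metrics\<close>

definition diag_metric :: "(4 \<Rightarrow> real \<Rightarrow> real) \<Rightarrow> real \<Rightarrow> real^4^4" where
  "diag_metric w t = diag_mat (\<lambda>i. w i t)"

definition half_log_deriv :: "(4 \<Rightarrow> real \<Rightarrow> real) \<Rightarrow> 4 \<Rightarrow> real \<Rightarrow> real" where
  "half_log_deriv w i t = deriv (w i) t / (2 * w i t)"

definition chr_diag :: "(4 \<Rightarrow> real \<Rightarrow> real) \<Rightarrow> 4 \<Rightarrow> 4 \<Rightarrow> 4 \<Rightarrow> real \<Rightarrow> real" where
  "chr_diag w k i j t =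
     (if k = 0 then (if i = j then deriv (w i) t / 2 else 0)
      else if (i = 0 \<and> j = k) \<or> (j = 0 \<and> i = k) then half_log_deriv w k t else 0)"

lemma matrix_inv_diag_metric:
  "(\<And>i. w i t \<noteq> 0) \<Longrightarrow> matrix_inv (diag_metric w t) = diag_mat (\<lambda>i. inverse (w i t))"
  unfolding diag_metric_def by (rule matrix_inv_diag_mat)

lemma gm_time_diag_metric: "gm_time (diag_metric w) t u v = (\<Sum>i\<in>UNIV. u $ i * w i t * v $ i)"
proof -
  have "(\<Sum>j\<in>UNIV. u $ i * (if i = j then w i t else 0) * v $ j) = u $ i * w i t * v $ i" for i
  proof -
    have "(\<lambda>j. u $ i * (if i = j then w i t else 0) * v $ j) = (\<lambda>j. (if i = j then u $ i * w i t else 0) * v $ j)"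
      by auto
    then show ?thesis by (simp only: sum_delta_mult)
  qed
  then show ?thesis by (simp add: gm_time_def diag_metric_def)
qed

lemma chr_time_diag_metric:
  assumes "\<And>i. w i t \<noteq> 0" "w 0 = (\<lambda>_. -1)"
  shows "chr_time (diag_metric w) k i j t = chr_diag w k i j t"
proof -
  have deriv_entry: "deriv (\<lambda>t. diag_metric w t $ j $ l) t = (if j = l then deriv (w j) t else 0)" for j l
    by (cases "j = l") (simp_all add: diag_metric_def)
  have "chr_time (diag_metric w) k i j t = (1/2) * (inverse (w k t) *
      ((if i = 0 \<and> j = k then deriv (w j) t else 0) + (if j = 0 \<and> i = k then deriv (w i) t else 0)
       - (if k = 0 \<and> i = j then deriv (w i) t else 0)))"
    unfolding chr_time_def matrix_inv_diag_metric[of w t, OF assms(1)] deriv_entry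
    by (simp add: sum_delta_mult)
  also have "\<dots> = chr_diag w k i j t"
    using assms by (auto simp: chr_diag_def half_log_deriv_def field_simps)
  finally show ?thesis .
qed

lemma ssm_time_diag_metric_nth:
  assumes "\<And>i. w i t \<noteq> 0" "w 0 = (\<lambda>_. -1)"
  shows "ssm_time (diag_metric w) a F t $ k = (if a = 0 then deriv (\<lambda>t. F t $ k) t else 0)
     + (\<Sum>j\<in>UNIV. chr_diag w k a j t * F t $ j) - F t $ 0 * axis a 1 $ k - w a t * F t $ a * axis 0 1 $ k"
  using assms
  by (simp add: ssm_time_def LC_time_def chr_time_diag_metric gm_time_diag_metric
      mult.commute[of _ "axis _ _ $ _"] mult.assoc sum_axis_mult)

definition ssm_diag_coord :: "(4 \<Rightarrow> real \<Rightarrow> real) \<Rightarrow> 4 \<Rightarrow> 4 \<Rightarrow> real \<Rightarrow> real^4" where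
  "ssm_diag_coord w c b t = (\<chi> k.
     if c = 0 \<and> b \<noteq> 0 \<and> k = b then half_log_deriv w b t
     else if b = 0 \<and> c \<noteq> 0 \<and> k = c then half_log_deriv w c t - 1
     else if c = b \<and> c \<noteq> 0 \<and> k = 0 then deriv (w c) t / 2 - w c t
     else 0)"

lemma ssm_time_diag_metric_coord:
  assumes "\<And>i. w i t \<noteq> 0" "w 0 = (\<lambda>_. -1)"
  shows "ssm_time (diag_metric w) c (\<lambda>_. axis b 1) t = ssm_diag_coord w c b t"
  unfolding vec_eq_iff
proof
  fix k
  have "(\<Sum>j\<in>UNIV. chr_diag w k c j t * axis b 1 $ j) = chr_diag w k c b t"
    by (simp add: mult.commute[of _ "axis _ _ $ _"] sum_axis_mult)
  with assms(2) show "ssm_time (diag_metric w) c (\<lambda>_. axis b 1) t $ k = ssm_diag_coord w c b t $ k"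
    unfolding ssm_time_diag_metric_nth[of w t, OF assms]
    by (auto simp: ssm_diag_coord_def chr_diag_def axis_def)
qed

lemma deriv_ssm_time_diag_metric_coord:
  assumes "open S" "t \<in> S" "\<forall>s\<in>S. \<forall>i. w i s \<noteq> 0" "w 0 = (\<lambda>_. -1)"
  shows "deriv (\<lambda>s. ssm_time (diag_metric w) c (\<lambda>_. axis b 1) s $ k) t
       = deriv (\<lambda>s. ssm_diag_coord w c b s $ k) t"
proof (rule deriv_cong_ev[OF _ refl])
  have "eventually (\<lambda>s. s \<in> S) (nhds t)"
    using assms by (simp add: eventually_nhds_in_open)
  then show "eventually (\<lambda>s. ssm_time (diag_metric w) c (\<lambda>_. axis b 1) s $ k
                          = ssm_diag_coord w c b s $ k) (nhds t)"
    by eventually_elim (use assms ssm_time_diag_metric_coord in auto)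
qed

lemma ric_time_diag_metric_trace:
  assumes "\<And>i. w i t \<noteq> 0"
  shows "ric_time (diag_metric w) a b t =
    (\<Sum>c\<in>UNIV. (ssm_time (diag_metric w) a (ssm_time (diag_metric w) c (\<lambda>_. axis b 1)) t
               - ssm_time (diag_metric w) c (ssm_time (diag_metric w) a (\<lambda>_. axis b 1)) t) $ c)"
proof -
  have "(\<Sum>d\<in>UNIV. (if c = d then inverse (w c t) else 0) * (\<Sum>i\<in>UNIV. V i * w i t * axis d 1 $ i))
      = V c" for c and V :: "4 \<Rightarrow> real"
  proof -
    have "(\<Sum>d\<in>UNIV. (if c = d then inverse (w c t) else 0) * (\<Sum>i\<in>UNIV. V i * w i t * axis d 1 $ i))
        = inverse (w c t) * (\<Sum>i\<in>UNIV. V i * w i t * axis c 1 $ i)"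
      by (rule sum_delta_mult)
    also have "\<dots> = V c"
      using assms by (simp add: mult.commute[of _ "axis _ _ $ _"] sum_axis_mult)
    finally show ?thesis .
  qed
  then show ?thesis
    unfolding ric_time_def matrix_inv_diag_metric[of w t, OF assms] gm_time_diag_metric
    by simp
qed

text \<open>D1 i and D2 i stand for the derivatives of half_log_deriv w i and of deriv (w i) at t.\<close>

definition ric_diag :: "(4 \<Rightarrow> real \<Rightarrow> real) \<Rightarrow> (4 \<Rightarrow> real) \<Rightarrow> (4 \<Rightarrow> real) \<Rightarrow> 4 \<Rightarrow> 4 \<Rightarrow> real \<Rightarrow> real" where
  "ric_diag w D1 D2 a b t =
     (if a \<noteq> b then 0
      else if a = 0 then (\<Sum>i\<in>{1,2,3::4}. D1 i + (half_log_deriv w i t - 1) * half_log_deriv w i t)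
      else half_log_deriv w a t * (deriv (w a) t / 2 - w a t) - D2 a / 2 + deriv (w a) t
        - (deriv (w a) t / 2 - w a t)
          * ((\<Sum>i\<in>{1,2,3::4}. half_log_deriv w i t - 1) - (half_log_deriv w a t - 1)))"

lemma ric_time_diag_metric:
  assumes S: "open S" "t \<in> S" "\<forall>s\<in>S. \<forall>i. w i s \<noteq> 0" and w0: "w 0 = (\<lambda>_. -1)"
    and D1: "\<And>i. i \<noteq> 0 \<Longrightarrow> (half_log_deriv w i has_real_derivative D1 i) (at t)"
    and dw: "\<And>i. i \<noteq> 0 \<Longrightarrow> (w i has_real_derivative deriv (w i) t) (at t)"
    and D2: "\<And>i. i \<noteq> 0 \<Longrightarrow> (deriv (w i) has_real_derivative D2 i) (at t)"
  shows "ric_time (diag_metric w) a b t = ric_diag w D1 D2 a b t"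
proof -
  have wt: "\<And>i. w i t \<noteq> 0" using S by auto
  have "deriv (half_log_deriv w i) t = D1 i" if "i \<noteq> 0" for i
    using D1 that DERIV_imp_deriv by blast
  moreover have "deriv (\<lambda>s. half_log_deriv w i s - 1) t = D1 i" if "i \<noteq> 0" for i
    by (rule DERIV_imp_deriv) (use that in \<open>auto intro!: derivative_eq_intros D1\<close>)
  moreover have "deriv (\<lambda>s. deriv (w i) s / 2 - w i s) t = D2 i / 2 - deriv (w i) t" if "i \<noteq> 0" for i
    by (rule DERIV_imp_deriv) (use that in \<open>auto intro!: derivative_eq_intros D2 dw\<close>)
  moreover have "deriv (w 0) t = 0" using w0 by simp
  \<comment> \<open>sum_4 enumerates the index 4, which is the time index 0 of type 4\<close>
  moreover have four: "(4::4) = 0" by simp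
  ultimately show ?thesis
    unfolding ric_time_diag_metric_trace[of w t, OF wt] ric_diag_def
    using exhaust_4[of a] exhaust_4[of b]
    by (elim disjE; simp add: ssm_time_diag_metric_nth[of w t, OF wt w0]
        ssm_time_diag_metric_coord[of w t, OF wt w0] deriv_ssm_time_diag_metric_coord[OF S w0]
        sum_4 four ssm_diag_coord_def chr_diag_def w0; simp add: axis_def algebra_simps)
qed

definition warp_exponent :: "real \<Rightarrow> real \<Rightarrow> real \<Rightarrow> 4 \<Rightarrow> real" where
  "warp_exponent p1 p2 p3 i = (if i = 1 then p1 else if i = 2 then p2 else p3)"

definition warp_weight :: "(real \<Rightarrow> real) \<Rightarrow> real \<Rightarrow> real \<Rightarrow> real \<Rightarrow> 4 \<Rightarrow> real \<Rightarrow> real" where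
  "warp_weight \<phi> p1 p2 p3 i t = (if i = 0 then -1 else \<phi> t powr (2 * warp_exponent p1 p2 p3 i))"

lemma warp_metric_eq_diag_metric:
  "warp_metric \<phi> p1 p2 p3 = (\<lambda>x. diag_metric (warp_weight \<phi> p1 p2 p3) (x $ 0))"
  by (rule ext) (simp add: warp_metric_def diag_metric_def warp_weight_def warp_exponent_def vec_eq_iff)

lemma has_real_derivative_warp_weight:
  assumes "\<phi> s > 0" "(\<phi> has_real_derivative deriv \<phi> s) (at s)" "i \<noteq> 0"
  shows "(warp_weight \<phi> p1 p2 p3 i has_real_derivative
           2 * warp_exponent p1 p2 p3 i * warp_weight \<phi> p1 p2 p3 i s * (deriv \<phi> s / \<phi> s)) (at s)"
proof -
  let ?r = "2 * warp_exponent p1 p2 p3 i"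
  have w: "warp_weight \<phi> p1 p2 p3 i = (\<lambda>t. \<phi> t powr ?r)"
    using assms(3) by (simp add: warp_weight_def fun_eq_iff)
  have "((\<lambda>t. \<phi> t powr ?r) has_real_derivative ?r * \<phi> s powr (?r - of_nat 1) * deriv \<phi> s) (at s)"
    by (rule DERIV_fun_powr[OF assms(2,1)])
  moreover have "?r * \<phi> s powr (?r - of_nat 1) * deriv \<phi> s
      = ?r * warp_weight \<phi> p1 p2 p3 i s * (deriv \<phi> s / \<phi> s)"
    using assms by (simp add: w powr_diff)
  ultimately show ?thesis by (simp add: w)
qed

lemma ric_time_warp_metric:
  fixes \<phi> :: "real \<Rightarrow> real" and p1 p2 p3 H' :: real
  assumes I: "open I" "t \<in> I" and pos: "\<forall>s\<in>I. \<phi> s > 0"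
    and d\<phi>: "\<forall>s\<in>I. (\<phi> has_real_derivative deriv \<phi> s) (at s)"
    and dH: "((\<lambda>s. deriv \<phi> s / \<phi> s) has_real_derivative H') (at t)"
  defines "H \<equiv> deriv \<phi> t / \<phi> t" and "\<zeta> \<equiv> p1 + p2 + p3" and "\<eta> \<equiv> p1^2 + p2^2 + p3^2"
  shows "ric_time (diag_metric (warp_weight \<phi> p1 p2 p3)) a b t =
    (if a \<noteq> b then 0
     else if a = 0 then \<zeta> * H' + \<eta> * H^2 - \<zeta> * H
     else - warp_weight \<phi> p1 p2 p3 a t
            * (warp_exponent p1 p2 p3 a * (H' + \<zeta> * H^2 - 2 * H) - \<zeta> * H + 2))"
proof -
  define U where "U = (\<lambda>s. deriv \<phi> s / \<phi> s)"
  define w where "w = warp_weight \<phi> p1 p2 p3"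
  define e where "e = warp_exponent p1 p2 p3"
  have dU: "(U has_real_derivative H') (at t)" using dH by (simp add: U_def)
  have w0: "w 0 = (\<lambda>_. -1)" by (simp add: w_def warp_weight_def fun_eq_iff)
  have w_nz: "\<forall>s\<in>I. \<forall>i. w i s \<noteq> 0" using pos by (auto simp: w_def warp_weight_def)
  have has_deriv_w: "(w i has_real_derivative 2 * e i * w i s * U s) (at s)"
    if "s \<in> I" "i \<noteq> 0" for s i
    unfolding w_def e_def U_def using pos d\<phi> that by (intro has_real_derivative_warp_weight) auto
  have deriv_w: "deriv (w i) s = 2 * e i * w i s * U s" if "s \<in> I" "i \<noteq> 0" for s i
    by (rule DERIV_imp_deriv[OF has_deriv_w[OF that]])
  have hld: "half_log_deriv w i s = e i * U s" if "s \<in> I" "i \<noteq> 0" for s i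
    using deriv_w[OF that] w_nz that(1) by (simp add: half_log_deriv_def)
  have D1: "(half_log_deriv w i has_real_derivative e i * H') (at t)" if "i \<noteq> 0" for i
    by (rule has_field_derivative_transform_within_open[OF DERIV_cmult[OF dU] I])
      (simp add: hld that)
  have dw: "(w i has_real_derivative deriv (w i) t) (at t)" if "i \<noteq> 0" for i
    using has_deriv_w[OF I(2) that] deriv_w[OF I(2) that] by simp
  have D2: "(deriv (w i) has_real_derivative 2 * e i * (deriv (w i) t * U t + w i t * H')) (at t)"
    if "i \<noteq> 0" for i
  proof -
    have "((\<lambda>s. 2 * e i * w i s * U s) has_real_derivative
            2 * e i * (deriv (w i) t * U t + w i t * H')) (at t)"
      by (rule DERIV_cong[OF DERIV_mult'[OF DERIV_cmult[OF dw[OF that]] dU]]) (simp add: algebra_simps)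
    then show ?thesis
      by (rule has_field_derivative_transform_within_open[OF _ I]) (simp add: deriv_w that)
  qed
  have "ric_time (diag_metric w) a b t
      = ric_diag w (\<lambda>i. e i * H') (\<lambda>i. 2 * e i * (deriv (w i) t * U t + w i t * H')) a b t"
    by (rule ric_time_diag_metric[OF I w_nz w0 D1 dw D2])
  also have "\<dots> = (if a \<noteq> b then 0
     else if a = 0 then \<zeta> * H' + \<eta> * H^2 - \<zeta> * H
     else - w a t * (e a * (H' + \<zeta> * H^2 - 2 * H) - \<zeta> * H + 2))"
  proof -
    have Ut: "U t = H" by (simp add: U_def H_def)
    then have "half_log_deriv w i t = e i * H" "deriv (w i) t = 2 * e i * w i t * H"
      if "i \<noteq> 0" for i
      using hld[OF I(2) that] deriv_w[OF I(2) that] by simp_all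
    then show ?thesis
      by (simp add: Ut ric_diag_def e_def warp_exponent_def \<zeta>_def \<eta>_def algebra_simps power2_eq_square)
  qed
  finally show ?thesis by (simp add: w_def e_def)
qed

text \<open>The Einstein equations in terms of H = phi'/phi and H' = (phi'/phi)': the (t,t) component,
  and the fibre components divided by -phi^(2 p_i).\<close>

definition warp_einstein_eqs :: "real \<Rightarrow> real \<Rightarrow> real \<Rightarrow> real \<Rightarrow> real \<Rightarrow> real \<Rightarrow> bool" where
  "warp_einstein_eqs p1 p2 p3 lam H H' \<longleftrightarrow>
     (p1 + p2 + p3) * H' + (p1^2 + p2^2 + p3^2) * H^2 - (p1 + p2 + p3) * H = - lam \<and>
     (\<forall>p\<in>{p1, p2, p3}. p * (H' + (p1 + p2 + p3) * H^2 - 2 * H) - (p1 + p2 + p3) * H + 2 = - lam)"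

lemma ric_time_warp_metric_eq_iff:
  assumes "open I" "t \<in> I" "\<forall>s\<in>I. \<phi> s > 0"
    and "\<forall>s\<in>I. (\<phi> has_real_derivative deriv \<phi> s) (at s)"
    and "((\<lambda>s. deriv \<phi> s / \<phi> s) has_real_derivative H') (at t)"
  shows "(\<forall>a b. ric_time (diag_metric (warp_weight \<phi> p1 p2 p3)) a b t
                = lam * diag_metric (warp_weight \<phi> p1 p2 p3) t $ a $ b)
         \<longleftrightarrow> warp_einstein_eqs p1 p2 p3 lam (deriv \<phi> t / \<phi> t) H'"
proof -
  have pos: "warp_weight \<phi> p1 p2 p3 j t > 0" if "j \<noteq> 0" for j
    using assms(2,3) that by (auto simp: warp_weight_def)
  have cancel: "- (w * B) = lam * w \<longleftrightarrow> B = - lam" if "w > 0" for w B :: real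
  proof -
    have "- (w * B) = lam * w \<longleftrightarrow> w * (- B) = w * lam" by (simp add: algebra_simps)
    with that show ?thesis by (simp only: mult_cancel_left) auto
  qed
  have w0: "warp_weight \<phi> p1 p2 p3 0 t = -1" by (simp add: warp_weight_def)
  have four: "(4::4) = 0" by simp
  show ?thesis
    unfolding ric_time_warp_metric[OF assms] forall_4 four
    by (simp add: diag_metric_def w0 pos cancel warp_einstein_eqs_def warp_exponent_def conj_ac)
qed

lemma einstein_warp_metric_iff:
  assumes "open I" "\<forall>t\<in>I. \<phi> t > 0" and d\<phi>: "\<forall>t\<in>I. \<phi> differentiable (at t)"
    and dH: "\<forall>t\<in>I. (\<lambda>s. deriv \<phi> s / \<phi> s) differentiable (at t)"
  shows "einstein (warp_metric \<phi> p1 p2 p3) (ssm (warp_metric \<phi> p1 p2 p3) (cfield 0)) {x. x $ 0 \<in> I} lam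
    \<longleftrightarrow> (\<forall>t\<in>I. warp_einstein_eqs p1 p2 p3 lam (deriv \<phi> t / \<phi> t) (deriv (\<lambda>s. deriv \<phi> s / \<phi> s) t))"
proof -
  have "einstein (warp_metric \<phi> p1 p2 p3) (ssm (warp_metric \<phi> p1 p2 p3) (cfield 0)) {x. x $ 0 \<in> I} lam
    \<longleftrightarrow> (\<forall>t\<in>I. \<forall>a b. ric_time (diag_metric (warp_weight \<phi> p1 p2 p3)) a b t
                       = lam * diag_metric (warp_weight \<phi> p1 p2 p3) t $ a $ b)"
    unfolding einstein_def warp_metric_eq_diag_metric ric_time_eq
    using all_time_coord_iff[of 0 I "\<lambda>t. \<forall>a b. ric_time (diag_metric (warp_weight \<phi> p1 p2 p3)) a b t
                                     = lam * diag_metric (warp_weight \<phi> p1 p2 p3) t $ a $ b"]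
    by simp
  also have "\<dots> \<longleftrightarrow> (\<forall>t\<in>I. warp_einstein_eqs p1 p2 p3 lam (deriv \<phi> t / \<phi> t) (deriv (\<lambda>s. deriv \<phi> s / \<phi> s) t))"
    using d\<phi> dH
    by (intro ball_cong refl ric_time_warp_metric_eq_iff[OF assms(1) _ assms(2)])
      (simp_all add: DERIV_deriv_iff_real_differentiable)
  finally show ?thesis .
qed

subsection \<open>Solving the Einstein equations\<close>

lemma warp_einstein_eqs_slope:
  assumes "\<not> (p1 = p2 \<and> p2 = p3)" "warp_einstein_eqs p1 p2 p3 lam H H'"
  shows "H' + (p1 + p2 + p3) * H^2 - 2 * H = 0" and "(p1 + p2 + p3) * H = 2 + lam"
proof -
  define q where "q = H' + (p1 + p2 + p3) * H^2 - 2 * H"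
  have e1: "p1 * q - (p1 + p2 + p3) * H + 2 = - lam" and e2: "p2 * q - (p1 + p2 + p3) * H + 2 = - lam"
    and e3: "p3 * q - (p1 + p2 + p3) * H + 2 = - lam"
    using assms(2) by (auto simp: warp_einstein_eqs_def q_def)
  have "(p1 - p2) * q = 0" "(p2 - p3) * q = 0"
    using e1 e2 e3 by (simp_all only: left_diff_distrib)
  with assms(1) have "q = 0" by auto
  then show "H' + (p1 + p2 + p3) * H^2 - 2 * H = 0" by (simp add: q_def)
  from e1 \<open>q = 0\<close> show "(p1 + p2 + p3) * H = 2 + lam" by simp
qed

lemma deriv_eq_0_if_constant_on_open:
  assumes "open S" "t \<in> S" "\<forall>s\<in>S. f s = c"
  shows "deriv f t = (0::real)"
proof (rule DERIV_imp_deriv)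
  show "(f has_real_derivative 0) (at t)"
    by (rule has_field_derivative_transform_within_open[OF DERIV_const[of c] assms(1,2)])
      (use assms(3) in auto)
qed

lemma warp_einstein_eqs_sum_nonzero:
  assumes "open I" "t0 \<in> I" "\<not> (p1 = p2 \<and> p2 = p3)"
    and dH: "\<forall>t\<in>I. (H has_real_derivative deriv H t) (at t)"
    and eqs: "\<forall>t\<in>I. warp_einstein_eqs p1 p2 p3 lam (H t) (deriv H t)"
  shows "p1 + p2 + p3 \<noteq> 0"
proof
  assume \<zeta>: "p1 + p2 + p3 = 0"
  define \<eta> where "\<eta> = p1^2 + p2^2 + p3^2"
  have H': "deriv H t = 2 * H t" and lam: "lam = -2" if "t \<in> I" for t
    using warp_einstein_eqs_slope[OF assms(3) eqs[rule_format, OF that]] \<zeta> by simp_all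
  have HH: "\<eta> * (H t * H t) = 2" if "t \<in> I" for t
    using eqs that lam[OF that] \<zeta> by (simp add: warp_einstein_eqs_def \<eta>_def power2_eq_square)
  then have "\<eta> \<noteq> 0" using assms(2) by force
  with HH have "\<forall>t\<in>I. H t * H t = 2 / \<eta>" by (simp add: field_simps)
  then have "deriv (\<lambda>s. H s * H s) t0 = 0"
    by (rule deriv_eq_0_if_constant_on_open[OF assms(1,2)])
  moreover have "deriv (\<lambda>s. H s * H s) t0 = 4 * (H t0 * H t0)"
    using DERIV_imp_deriv[OF DERIV_mult[OF dH[rule_format, OF assms(2)] dH[rule_format, OF assms(2)]]]
      H'[OF assms(2)] by simp
  ultimately have "H t0 * H t0 = 0" by simp
  with HH[OF assms(2)] show False by simp
qed

lemma warp_einstein_eqs_imp_exponential_rate: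
  fixes p1 p2 p3 :: real
  assumes "open I" "I \<noteq> {}" "\<not> (p1 = p2 \<and> p2 = p3)"
    and dH: "\<forall>t\<in>I. (H has_real_derivative deriv H t) (at t)"
    and eqs: "\<forall>t\<in>I. warp_einstein_eqs p1 p2 p3 lam (H t) (deriv H t)"
  defines "\<zeta> \<equiv> p1 + p2 + p3" and "\<eta> \<equiv> p1^2 + p2^2 + p3^2"
  shows "lam = 0 \<and> 2 * \<eta> / \<zeta>^2 = 1 \<and> (\<forall>t\<in>I. H t = 2 / \<zeta>)"
proof -
  obtain t0 where t0: "t0 \<in> I" using assms(2) by blast
  have "\<zeta> \<noteq> 0"
    unfolding \<zeta>_def by (rule warp_einstein_eqs_sum_nonzero[OF assms(1) t0 assms(3) dH eqs])
  define c where "c = (2 + lam) / \<zeta>"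
  have Hc: "\<forall>t\<in>I. H t = c"
  proof
    fix t assume "t \<in> I"
    then have "\<zeta> * H t = 2 + lam"
      using warp_einstein_eqs_slope(2)[OF assms(3) eqs[rule_format]] by (simp add: \<zeta>_def)
    with \<open>\<zeta> \<noteq> 0\<close> show "H t = c" by (simp add: c_def field_simps)
  qed
  have "deriv H t0 = 0" by (rule deriv_eq_0_if_constant_on_open[OF assms(1) t0 Hc])
  then have slope: "\<zeta> * c^2 - 2 * c = 0" and tt: "\<eta> * c^2 - \<zeta> * c = - lam" and rate: "\<zeta> * c = 2 + lam"
    using warp_einstein_eqs_slope[OF assms(3) eqs[rule_format, OF t0]] eqs t0 Hc
    by (auto simp: warp_einstein_eqs_def \<zeta>_def \<eta>_def)
  have "c \<noteq> 0" using tt rate by auto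
  with slope have "\<zeta> * c = 2" by (simp add: power2_eq_square algebra_simps)
  with rate have "lam = 0" by simp
  from \<open>\<zeta> * c = 2\<close> \<open>\<zeta> \<noteq> 0\<close> have c: "c = 2 / \<zeta>" by (simp add: field_simps)
  from tt \<open>\<zeta> * c = 2\<close> \<open>lam = 0\<close> have "\<eta> * c^2 = 2" by simp
  have "4 * \<eta> = \<eta> * (\<zeta> * c)^2" using \<open>\<zeta> * c = 2\<close> by simp
  also have "\<dots> = \<zeta>^2 * (\<eta> * c^2)" by (simp add: power_mult_distrib)
  also have "\<dots> = 2 * \<zeta>^2" using \<open>\<eta> * c^2 = 2\<close> by simp
  finally have "2 * \<eta> / \<zeta>^2 = 1" using \<open>\<zeta> \<noteq> 0\<close> by (simp add: field_simps)
  moreover from Hc c have "\<forall>t\<in>I. H t = 2 / \<zeta>" by simp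
  ultimately show ?thesis using \<open>lam = 0\<close> by blast
qed

lemma warp_einstein_eqs_if_exponential_rate:
  fixes p1 p2 p3 :: real
  assumes "open I" "2 * (p1^2 + p2^2 + p3^2) / (p1 + p2 + p3)^2 = 1"
    and "\<forall>t\<in>I. H t = 2 / (p1 + p2 + p3)"
  shows "\<forall>t\<in>I. warp_einstein_eqs p1 p2 p3 0 (H t) (deriv H t)"
proof
  fix t assume t: "t \<in> I"
  define \<zeta> where "\<zeta> = p1 + p2 + p3"
  have "\<zeta> \<noteq> 0" "2 * (p1^2 + p2^2 + p3^2) = \<zeta>^2"
    using assms(2) by (auto simp: \<zeta>_def field_simps)
  moreover have "deriv H t = 0" by (rule deriv_eq_0_if_constant_on_open[OF assms(1) t assms(3)])
  ultimately show "warp_einstein_eqs p1 p2 p3 0 (H t) (deriv H t)"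
    unfolding warp_einstein_eqs_def assms(3)[rule_format, OF t] \<zeta>_def[symmetric]
    by (simp add: field_simps power2_eq_square)
qed

lemma deriv_eq_mult_iff_exp:
  fixes f :: "real \<Rightarrow> real"
  assumes "open I" "convex I" and df: "\<forall>t\<in>I. f differentiable (at t)"
  shows "(\<forall>t\<in>I. deriv f t = c * f t) \<longleftrightarrow> (\<exists>c0. \<forall>t\<in>I. f t = c0 * exp (c * t))"
proof
  assume f': "\<forall>t\<in>I. deriv f t = c * f t"
  have "\<exists>c0. \<forall>t\<in>I. f t * exp (- (c * t)) = c0"
  proof (rule has_field_derivative_zero_constant[OF assms(2)])
    fix t assume t: "t \<in> I"
    have "((\<lambda>s. f s * exp (- (c * s))) has_real_derivative
            deriv f t * exp (- (c * t)) - f t * (c * exp (- (c * t)))) (at t)"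
      using df t by (auto intro!: derivative_eq_intros simp: DERIV_deriv_iff_real_differentiable)
    with f' t show "((\<lambda>s. f s * exp (- (c * s))) has_real_derivative 0) (at t within I)"
      by (auto intro: has_field_derivative_at_within)
  qed
  then obtain c0 where "\<forall>t\<in>I. f t * exp (- (c * t)) = c0" by blast
  then show "\<exists>c0. \<forall>t\<in>I. f t = c0 * exp (c * t)"
    by (metis exp_minus_inverse mult.assoc mult.right_neutral)
next
  assume "\<exists>c0. \<forall>t\<in>I. f t = c0 * exp (c * t)"
  then obtain c0 where f: "\<forall>t\<in>I. f t = c0 * exp (c * t)" by blast
  show "\<forall>t\<in>I. deriv f t = c * f t"
  proof
    fix t assume t: "t \<in> I"
    have "((\<lambda>s. c0 * exp (c * s)) has_real_derivative c * (c0 * exp (c * t))) (at t)"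
      by (auto intro!: derivative_eq_intros)
    then have "(f has_real_derivative c * (c0 * exp (c * t))) (at t)"
      by (rule has_field_derivative_transform_within_open[OF _ assms(1) t]) (use f in auto)
    with f t show "deriv f t = c * f t" by (simp add: DERIV_imp_deriv)
  qed
qed

lemma log_deriv_eq_const_iff_exp:
  fixes f :: "real \<Rightarrow> real"
  assumes "open I" "convex I" "\<forall>t\<in>I. f differentiable (at t)" "\<forall>t\<in>I. f t > 0"
  shows "(\<forall>t\<in>I. deriv f t / f t = c) \<longleftrightarrow> (\<exists>c0. \<forall>t\<in>I. f t = c0 * exp (c * t))"
proof -
  have "(\<forall>t\<in>I. deriv f t / f t = c) \<longleftrightarrow> (\<forall>t\<in>I. deriv f t = c * f t)"
    using assms(4) by (auto simp: divide_eq_eq)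
  also have "\<dots> \<longleftrightarrow> (\<exists>c0. \<forall>t\<in>I. f t = c0 * exp (c * t))"
    by (rule deriv_eq_mult_iff_exp[OF assms(1-3)])
  finally show ?thesis .
qed

lemma smooth_on_real_imp_differentiable:
  assumes "smooth_on_real f S" "t \<in> S"
  shows "f differentiable (at t)" and "deriv f differentiable (at t)"
proof -
  from assms have "(deriv ^^ 0) f differentiable (at t)" "(deriv ^^ 1) f differentiable (at t)"
    unfolding smooth_on_real_def by blast+
  then show "f differentiable (at t)" "deriv f differentiable (at t)" by simp_all
qed

theorem theorem4p30:
  fixes I :: "real set" and \<phi> :: "real \<Rightarrow> real" and p1 p2 p3 lam :: real
  assumes "open I" and "is_interval I" and "I \<noteq> {}"
    and "smooth_on_real \<phi> I" and "\<forall>t\<in>I. \<phi> t > 0"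
    and "\<not> (p1 = p2 \<and> p2 = p3)"
  defines "\<zeta> \<equiv> p1 + p2 + p3" and "\<eta> \<equiv> p1^2 + p2^2 + p3^2"
  shows "einstein (warp_metric \<phi> p1 p2 p3)
            (ssm (warp_metric \<phi> p1 p2 p3) (cfield 0)) {x. x $ 0 \<in> I} lam
         \<longleftrightarrow> (lam = 0 \<and> 2 * \<eta> / \<zeta>^2 = 1 \<and>
              (\<exists>c0. \<forall>t\<in>I. \<phi> t = c0 * exp (2 * t / \<zeta>)))"
proof -
  define H where "H = (\<lambda>s. deriv \<phi> s / \<phi> s)"
  have d\<phi>: "\<forall>t\<in>I. \<phi> differentiable (at t)" and d\<phi>': "\<forall>t\<in>I. deriv \<phi> differentiable (at t)"
    using smooth_on_real_imp_differentiable[OF assms(4)] by blast+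
  have dH: "\<forall>t\<in>I. H differentiable (at t)"
    using d\<phi> d\<phi>' assms(5) by (auto simp: H_def intro!: derivative_intros)
  have "einstein (warp_metric \<phi> p1 p2 p3) (ssm (warp_metric \<phi> p1 p2 p3) (cfield 0)) {x. x $ 0 \<in> I} lam
      \<longleftrightarrow> (\<forall>t\<in>I. warp_einstein_eqs p1 p2 p3 lam (H t) (deriv H t))"
    unfolding H_def by (rule einstein_warp_metric_iff[OF assms(1,5) d\<phi> dH[unfolded H_def]])
  also have "\<dots> \<longleftrightarrow> lam = 0 \<and> 2 * \<eta> / \<zeta>^2 = 1 \<and> (\<forall>t\<in>I. H t = 2 / \<zeta>)"
    using warp_einstein_eqs_imp_exponential_rate[OF assms(1,3,6)]
      warp_einstein_eqs_if_exponential_rate[OF assms(1), of p1 p2 p3 H] dH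
    by (auto simp: \<zeta>_def \<eta>_def DERIV_deriv_iff_real_differentiable)
  also have "(\<forall>t\<in>I. H t = 2 / \<zeta>) \<longleftrightarrow> (\<exists>c0. \<forall>t\<in>I. \<phi> t = c0 * exp (2 / \<zeta> * t))"
    unfolding H_def
    by (rule log_deriv_eq_const_iff_exp[OF assms(1) is_interval_convex[OF assms(2)] d\<phi> assms(5)])
  finally show ?thesis by (simp add: mult.commute)
qed

end
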